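(* The set $\mathbb F_{\widehat{\mathcal Q}}:=\{d\mathrm Q/d\mathrm P\mid\mathrm Q\in\widehat{\mathcal Q}\}$ is closed w.r.t. the $L^1(\Omega,\mathcal F,\mathrm P)$-norm. It is even compact w.r.t. the $L^1$-norm if $\mathcal Q$ is relatively compact w.r.t. the topology of total variation; in this case $\mathbb F_{\widehat{\mathcal Q}^e}:=\{d\mathrm Q/d\mathrm P\mid\mathrm Q\in\widehat{\mathcal Q}^e\}$ is relatively compact w.r.t. the $L^1$-norm.
   Context: $(\Omega,\mathcal F,\mathrm P)$ is a probability space and $\mathcal Q$ is a nonempty set of probability measures on $\mathcal F$, each absolutely continuous w.r.t. $\mathrm P$. $\widehat{\mathcal Q}$ is the set of all probability measures $\mathrm Q$ on $\mathcal F$ with $\mathbb E_{\mathrm Q}[X]\ge\inf_{\mathrm Q'\in\mathcal Q}\mathbb E_{\mathrm Q'}[X]$ for every $\mathrm P$-essentially bounded random variable $X$ (such $\mathrm Q$ are absolutely continuous w.r.t. $\mathrm P$), and $\widehat{\mathcal Q}^e$ is the set of members of $\widehat{\mathcal Q}$ equivalent to $\mathrm P$. The topology of total variation is induced by $d_{tv}(\mathrm Q_1,\mathrm Q_2)=\sup_{A\in\mathcal F}|\mathrm Q_1(A)-\mathrm Q_2(A)|$. *)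

theory Defs
  imports "HOL-Probability.Probability"
begin

definition prob_on :: "'a measure \<Rightarrow> 'a measure \<Rightarrow> bool" where
  "prob_on M Q \<longleftrightarrow> prob_space Q \<and> sets Q = sets M"

definition ess_bounded :: "'a measure \<Rightarrow> ('a \<Rightarrow> real) \<Rightarrow> bool" where
  "ess_bounded M X \<longleftrightarrow> X \<in> borel_measurable M \<and> (\<exists>C. AE x in M. \<bar>X x\<bar> \<le> C)"

definition Qhat :: "'a measure \<Rightarrow> 'a measure set \<Rightarrow> 'a measure set" where
  "Qhat M Qs = {Q. prob_on M Q \<and>
      (\<forall>X. ess_bounded M X \<longrightarrow> integral\<^sup>L Q X \<ge> (INF Q'\<in>Qs. integral\<^sup>L Q' X))}"

definition Qhat_e :: "'a measure \<Rightarrow> 'a measure set \<Rightarrow> 'a measure set" where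
  "Qhat_e M Qs = {Q \<in> Qhat M Qs. absolutely_continuous M Q \<and> absolutely_continuous Q M}"

text \<open>Elements of L^1 are represented by functions; the set is closed under P-a.e. modification
  among nonnegative measurable functions.\<close>
definition dens_set :: "'a measure \<Rightarrow> 'a measure set \<Rightarrow> ('a \<Rightarrow> real) set" where
  "dens_set M Qs = {f. f \<in> borel_measurable M \<and> (\<forall>x\<in>space M. 0 \<le> f x) \<and>
      density M (\<lambda>x. ennreal (f x)) \<in> Qs}"

definition L1_conv :: "'a measure \<Rightarrow> (nat \<Rightarrow> 'a \<Rightarrow> real) \<Rightarrow> ('a \<Rightarrow> real) \<Rightarrow> bool" where
  "L1_conv M f g \<longleftrightarrow> (\<lambda>n. \<integral>x. \<bar>f n x - g x\<bar> \<partial>M) \<longlonglongrightarrow> 0"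

text \<open>Closedness in L^1 (sequential, L^1 being metric): L^1 limits of sequences in F are
  a.e. equal to elements of F.\<close>
definition L1_closed :: "'a measure \<Rightarrow> ('a \<Rightarrow> real) set \<Rightarrow> bool" where
  "L1_closed M F \<longleftrightarrow> (\<forall>f g. (\<forall>n. f n \<in> F) \<and> integrable M g \<and> L1_conv M f g \<longrightarrow>
      (\<exists>h\<in>F. AE x in M. g x = h x))"

text \<open>Compactness in L^1 (sequential compactness; equivalent in metric spaces).\<close>
definition L1_compact :: "'a measure \<Rightarrow> ('a \<Rightarrow> real) set \<Rightarrow> bool" where
  "L1_compact M F \<longleftrightarrow> (\<forall>f. (\<forall>n. f n \<in> F) \<longrightarrow>
      (\<exists>(r::nat \<Rightarrow> nat) h. strict_mono r \<and> h \<in> F \<and> L1_conv M (f \<circ> r) h))"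

definition L1_relcompact :: "'a measure \<Rightarrow> ('a \<Rightarrow> real) set \<Rightarrow> bool" where
  "L1_relcompact M F \<longleftrightarrow> (\<forall>f. (\<forall>n. f n \<in> F) \<longrightarrow>
      (\<exists>(r::nat \<Rightarrow> nat) h. strict_mono r \<and> integrable M h \<and> L1_conv M (f \<circ> r) h))"

definition d_tv :: "'a measure \<Rightarrow> 'a measure \<Rightarrow> 'a measure \<Rightarrow> real" where
  "d_tv M Q1 Q2 = (SUP A\<in>sets M. \<bar>measure Q1 A - measure Q2 A\<bar>)"

text \<open>Relative compactness w.r.t. total variation in the space of probability measures on
  (space M, sets M) (sequential; this space is metric under d_tv).\<close>
definition tv_relcompact :: "'a measure \<Rightarrow> 'a measure set \<Rightarrow> bool" where
  "tv_relcompact M Qs \<longleftrightarrow> (\<forall>Q::nat \<Rightarrow> 'a measure. (\<forall>n. Q n \<in> Qs) \<longrightarrow>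
      (\<exists>(r::nat \<Rightarrow> nat) Q0. strict_mono r \<and> prob_on M Q0 \<and> (\<lambda>n. d_tv M (Q (r n)) Q0) \<longlonglongrightarrow> 0))"

end

(*
  Closedness: L1 convergence of densities entails convergence of their integrals against
  essentially bounded variables, which preserves total mass 1 and the inequalities defining
  Q-hat; the a.e. nonnegative limit is replaced by its positive part.

  Compactness: since L1 distance of densities is at most twice the total variation distance,
  the densities of Q form a totally bounded set, so a single finite partition approximates
  all of them by their conditional expectations. Testing the inequality defining Q-hat against
  Y = X - E[X | partition] with X = sgn (f - E[f | partition]) transfers this approximation to
  every density f of Q-hat, by self-adjointness of conditional expectation. Conditional
  expectations on a finite partition are determined by finitely many bounded cell masses, so
  a diagonal argument yields an L1-Cauchy subsequence, whose limit lies in the closed set.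
  Relative compactness for the equivalent measures follows from the inclusion in Q-hat.
*)

theory Submission
  imports Defs "HOL-Library.Diagonal_Subsequence"
begin

abbreviation L1_dist :: "'a measure \<Rightarrow> ('a \<Rightarrow> real) \<Rightarrow> ('a \<Rightarrow> real) \<Rightarrow> real" where
  "L1_dist M f g \<equiv> \<integral>x. \<bar>f x - g x\<bar> \<partial>M"

lemma L1_dist_commute: "L1_dist M f g = L1_dist M g f"
  by (simp add: abs_minus_commute)

lemma L1_dist_triangle:
  fixes f g h :: "'a \<Rightarrow> real"
  assumes "integrable M f" "integrable M g" "integrable M h"
  shows "L1_dist M f h \<le> L1_dist M f g + L1_dist M g h"
proof -
  have "L1_dist M f h \<le> (\<integral>x. \<bar>f x - g x\<bar> + \<bar>g x - h x\<bar> \<partial>M)"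
    using assms by (intro integral_mono) auto
  also have "\<dots> = L1_dist M f g + L1_dist M g h"
    using assms by (intro Bochner_Integration.integral_add) auto
  finally show ?thesis .
qed

lemma integrable_mult_ess_bounded:
  fixes f X :: "'a \<Rightarrow> real"
  assumes "integrable M f" "X \<in> borel_measurable M" "AE x in M. \<bar>X x\<bar> \<le> C"
  shows "integrable M (\<lambda>x. f x * X x)"
proof (rule Bochner_Integration.integrable_bound[where f="\<lambda>x. \<bar>C\<bar> * f x"])
  show "integrable M (\<lambda>x. \<bar>C\<bar> * f x)" using assms by auto
  show "(\<lambda>x. f x * X x) \<in> borel_measurable M"
    using borel_measurable_integrable[OF assms(1)] assms(2) by measurable
  show "AE x in M. norm (f x * X x) \<le> norm (\<bar>C\<bar> * f x)"
    using assms(3) by eventually_elim (simp add: abs_mult mult.commute mult_right_mono)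
qed

lemma abs_integral_mult_ess_bounded_le:
  fixes u X :: "'a \<Rightarrow> real"
  assumes u: "integrable M u" and X: "X \<in> borel_measurable M" "AE x in M. \<bar>X x\<bar> \<le> C"
  shows "\<bar>\<integral>x. u x * X x \<partial>M\<bar> \<le> \<bar>C\<bar> * (\<integral>x. \<bar>u x\<bar> \<partial>M)"
proof -
  have "\<bar>\<integral>x. u x * X x \<partial>M\<bar> \<le> (\<integral>x. \<bar>u x * X x\<bar> \<partial>M)"
    by (rule integral_abs_bound)
  also have "\<dots> \<le> (\<integral>x. \<bar>C\<bar> * \<bar>u x\<bar> \<partial>M)"
  proof (rule integral_mono_AE)
    show "integrable M (\<lambda>x. \<bar>u x * X x\<bar>)"
      using integrable_mult_ess_bounded[OF u X] by (rule integrable_abs)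
    show "integrable M (\<lambda>x. \<bar>C\<bar> * \<bar>u x\<bar>)" using u by auto
    show "AE x in M. \<bar>u x * X x\<bar> \<le> \<bar>C\<bar> * \<bar>u x\<bar>"
      using X(2)
    proof eventually_elim
      case (elim x)
      then have "\<bar>X x\<bar> \<le> \<bar>C\<bar>" by simp
      from mult_left_mono[OF this abs_ge_zero[of "u x"]] show ?case by (simp add: abs_mult mult.commute)
    qed
  qed
  finally show ?thesis by simp
qed

lemma L1_conv_integral_mult_tendsto:
  fixes f :: "nat \<Rightarrow> 'a \<Rightarrow> real"
  assumes f: "\<And>n. integrable M (f n)" and h: "integrable M h" and conv: "L1_conv M f h"
    and X: "X \<in> borel_measurable M" "AE x in M. \<bar>X x\<bar> \<le> C"
  shows "(\<lambda>n. \<integral>x. f n x * X x \<partial>M) \<longlonglongrightarrow> (\<integral>x. h x * X x \<partial>M)"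
proof -
  have bound: "norm ((\<integral>x. f n x * X x \<partial>M) - (\<integral>x. h x * X x \<partial>M)) \<le> \<bar>C\<bar> * L1_dist M (f n) h" for n
  proof -
    have "(\<integral>x. f n x * X x \<partial>M) - (\<integral>x. h x * X x \<partial>M) = (\<integral>x. f n x * X x - h x * X x \<partial>M)"
      by (rule Bochner_Integration.integral_diff[symmetric])
         (rule integrable_mult_ess_bounded[OF _ X], fact)+
    also have "\<dots> = (\<integral>x. (f n x - h x) * X x \<partial>M)"
      by (simp add: left_diff_distrib)
    also have "norm \<dots> \<le> \<bar>C\<bar> * L1_dist M (f n) h"
      unfolding real_norm_def
      by (rule abs_integral_mult_ess_bounded_le[OF Bochner_Integration.integrable_diff[OF f h] X])
    finally show ?thesis .
  qed
  have "(\<lambda>n. \<bar>C\<bar> * L1_dist M (f n) h) \<longlonglongrightarrow> 0"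
    using conv unfolding L1_conv_def by (rule tendsto_mult_right_zero)
  with always_eventually[OF allI[OF bound]]
  have "(\<lambda>n. (\<integral>x. f n x * X x \<partial>M) - (\<integral>x. h x * X x \<partial>M)) \<longlonglongrightarrow> 0"
    by (rule Lim_null_comparison)
  then show ?thesis by (rule LIM_zero_iff[THEN iffD1])
qed

lemma L1_conv_AE_cong:
  assumes "L1_conv M f g" and [measurable]: "\<And>n. f n \<in> borel_measurable M"
    "g \<in> borel_measurable M" "h \<in> borel_measurable M" and "AE x in M. g x = h x"
  shows "L1_conv M f h"
proof -
  have "L1_dist M (f n) g = L1_dist M (f n) h" for n
    using \<open>AE x in M. g x = h x\<close> by (intro integral_cong_AE) (measurable, auto)
  then show ?thesis using assms(1) by (simp add: L1_conv_def)
qed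

definition L1_Cauchy :: "'a measure \<Rightarrow> (nat \<Rightarrow> 'a \<Rightarrow> real) \<Rightarrow> bool" where
  "L1_Cauchy M f \<longleftrightarrow> (\<forall>e>0. \<exists>N. \<forall>a\<ge>N. \<forall>b\<ge>N. L1_dist M (f a) (f b) \<le> e)"

lemma nn_integral_abs_diff_AE_limit_le:
  fixes f h :: "'a \<Rightarrow> real" and g :: "nat \<Rightarrow> 'a \<Rightarrow> real"
  assumes [measurable]: "f \<in> borel_measurable M" "\<And>k. g k \<in> borel_measurable M"
    and lim: "AE x in M. (\<lambda>k. g k x) \<longlonglongrightarrow> h x"
    and le: "\<forall>\<^sub>F k in sequentially. (\<integral>\<^sup>+x. ennreal \<bar>f x - g k x\<bar> \<partial>M) \<le> e"
  shows "(\<integral>\<^sup>+x. ennreal \<bar>f x - h x\<bar> \<partial>M) \<le> e"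
proof -
  have "(\<integral>\<^sup>+x. ennreal \<bar>f x - h x\<bar> \<partial>M) = (\<integral>\<^sup>+x. liminf (\<lambda>k. ennreal \<bar>f x - g k x\<bar>) \<partial>M)"
  proof (rule nn_integral_cong_AE)
    show "AE x in M. ennreal \<bar>f x - h x\<bar> = liminf (\<lambda>k. ennreal \<bar>f x - g k x\<bar>)"
      using lim
    proof eventually_elim
      case (elim x)
      then have "(\<lambda>k. ennreal \<bar>f x - g k x\<bar>) \<longlonglongrightarrow> ennreal \<bar>f x - h x\<bar>"
        by (intro tendsto_ennrealI tendsto_rabs tendsto_diff tendsto_const)
      then show ?case by (intro lim_imp_Liminf[symmetric]) auto
    qed
  qed
  also have "\<dots> \<le> liminf (\<lambda>k. \<integral>\<^sup>+x. ennreal \<bar>f x - g k x\<bar> \<partial>M)"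
    by (rule nn_integral_liminf) measurable
  also have "\<dots> \<le> liminf (\<lambda>k. e)"
    using le by (rule Liminf_mono)
  finally show ?thesis by (simp add: Liminf_const)
qed

lemma L1_Cauchy_AE_convergent_subseq:
  fixes f :: "nat \<Rightarrow> 'a \<Rightarrow> real"
  assumes f: "\<And>n. integrable M (f n)" and Cauchy: "L1_Cauchy M f"
  obtains r h where "strict_mono r" "h \<in> borel_measurable M" "AE x in M. (\<lambda>i. f (r i) x) \<longlonglongrightarrow> h x"
proof -
  have [measurable]: "f n \<in> borel_measurable M" for n using f by auto
  have "\<exists>N. \<forall>i\<ge>N. \<forall>j\<ge>N. (LINT x|M. norm (f i x - f j x)) < e" if "e > 0" for e
  proof -
    have "0 < e / 2" using \<open>e > 0\<close> by simp
    then obtain N where N: "\<And>i j. i \<ge> N \<Longrightarrow> j \<ge> N \<Longrightarrow> L1_dist M (f i) (f j) \<le> e / 2"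
      using Cauchy unfolding L1_Cauchy_def by blast
    have "L1_dist M (f i) (f j) < e" if "i \<ge> N" "j \<ge> N" for i j
      using N[OF that] \<open>e > 0\<close> by linarith
    then show ?thesis unfolding real_norm_def by blast
  qed
  then obtain r where r: "strict_mono r" and "AE x in M. Cauchy (\<lambda>i. f (r i) x)"
    by (rule cauchy_L1_AE_cauchy_subseq[OF f])
  define h where "h x = lim (\<lambda>i. f (r i) x)" for x
  have "h \<in> borel_measurable M" unfolding h_def by measurable
  moreover have "AE x in M. (\<lambda>i. f (r i) x) \<longlonglongrightarrow> h x"
    using \<open>AE x in M. Cauchy _\<close>
    by eventually_elim (simp add: h_def Cauchy_convergent_iff convergent_LIMSEQ_iff)
  ultimately show ?thesis by (rule that[OF r])
qed

lemma L1_Cauchy_nn_integral_limit_le: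
  fixes f :: "nat \<Rightarrow> 'a \<Rightarrow> real"
  assumes f: "\<And>n. integrable M (f n)" and Cauchy: "L1_Cauchy M f"
    and r: "strict_mono r" and [measurable]: "h \<in> borel_measurable M"
    and lim: "AE x in M. (\<lambda>i. f (r i) x) \<longlonglongrightarrow> h x" and "0 < e"
  shows "\<exists>N. \<forall>m\<ge>N. (\<integral>\<^sup>+x. ennreal \<bar>f m x - h x\<bar> \<partial>M) \<le> ennreal e"
proof -
  have [measurable]: "f n \<in> borel_measurable M" for n using f by auto
  obtain N where N: "\<And>a b. a \<ge> N \<Longrightarrow> b \<ge> N \<Longrightarrow> L1_dist M (f a) (f b) \<le> e"
    using Cauchy \<open>0 < e\<close> unfolding L1_Cauchy_def by blast
  have "(\<integral>\<^sup>+x. ennreal \<bar>f m x - h x\<bar> \<partial>M) \<le> ennreal e" if "m \<ge> N" for m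
  proof (rule nn_integral_abs_diff_AE_limit_le[OF _ _ lim])
    show "\<forall>\<^sub>F k in sequentially. (\<integral>\<^sup>+x. ennreal \<bar>f m x - f (r k) x\<bar> \<partial>M) \<le> ennreal e"
      unfolding eventually_sequentially
    proof (intro exI allI impI)
      fix k assume "N \<le> k"
      then have "N \<le> r k" using seq_suble[OF r, of k] by simp
      then show "(\<integral>\<^sup>+x. ennreal \<bar>f m x - f (r k) x\<bar> \<partial>M) \<le> ennreal e"
        using N[OF that] f by (subst nn_integral_eq_integral) (auto simp: ennreal_leI)
    qed
  qed auto
  then show ?thesis by blast
qed

lemma L1_Cauchy_imp_L1_conv:
  fixes f :: "nat \<Rightarrow> 'a \<Rightarrow> real"
  assumes f: "\<And>n. integrable M (f n)" and Cauchy: "L1_Cauchy M f"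
  obtains h where "integrable M h" "L1_conv M f h"
proof -
  obtain r h where "strict_mono r" and [measurable]: "h \<in> borel_measurable M"
    and "AE x in M. (\<lambda>i. f (r i) x) \<longlonglongrightarrow> h x"
    by (rule L1_Cauchy_AE_convergent_subseq[OF f Cauchy])
  note bound = L1_Cauchy_nn_integral_limit_le[OF f Cauchy this]
  have [measurable]: "f n \<in> borel_measurable M" for n using f by auto
  obtain N1 where "(\<integral>\<^sup>+x. ennreal \<bar>f N1 x - h x\<bar> \<partial>M) \<le> 1"
    using bound[of 1] by auto
  then have "integrable M (\<lambda>x. f N1 x - h x)"
    by (intro integrableI_bounded) (simp_all add: order_le_less_trans[of _ 1])
  from Bochner_Integration.integrable_diff[OF f[of N1] this] have h: "integrable M h"
    by simp
  have "L1_conv M f h"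
    unfolding L1_conv_def
  proof (rule LIMSEQ_I)
    fix e :: real assume "0 < e"
    then obtain N where N: "\<And>m. m \<ge> N \<Longrightarrow> (\<integral>\<^sup>+x. ennreal \<bar>f m x - h x\<bar> \<partial>M) \<le> ennreal (e / 2)"
      using bound[of "e / 2"] by auto
    have "L1_dist M (f m) h \<le> e / 2" if "m \<ge> N" for m
      using N[OF that] \<open>0 < e\<close> f h
      by (subst (asm) nn_integral_eq_integral) (auto simp: ennreal_le_iff)
    moreover have "0 \<le> L1_dist M (f m) h" for m by (rule integral_nonneg_AE) simp
    ultimately show "\<exists>N. \<forall>m\<ge>N. norm (L1_dist M (f m) h - 0) < e"
      using \<open>0 < e\<close> by (intro exI[of _ N]) fastforce
  qed
  with h show ?thesis by (rule that)
qed

lemma prob_on_Qhat: "Q \<in> Qhat M Qs \<Longrightarrow> prob_on M Q"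
  by (simp add: Qhat_def)

context
  fixes M :: "'a measure" and Qs :: "'a measure set" and f :: "'a \<Rightarrow> real"
  assumes f: "f \<in> dens_set M Qs" and Qs: "\<And>Q. Q \<in> Qs \<Longrightarrow> prob_on M Q"
begin

lemma nn_integral_dens_set: "(\<integral>\<^sup>+x. ennreal (f x) \<partial>M) = 1"
proof -
  have [measurable]: "f \<in> borel_measurable M" and "density M (\<lambda>x. ennreal (f x)) \<in> Qs"
    using f by (auto simp: dens_set_def)
  then have "prob_space (density M (\<lambda>x. ennreal (f x)))"
    using Qs by (auto simp: prob_on_def)
  then have "emeasure (density M (\<lambda>x. ennreal (f x))) (space M) = 1"
    using prob_space.emeasure_space_1 by fastforce
  then show ?thesis by (simp add: emeasure_density)
qed

lemma integrable_dens_set: "integrable M f"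
  using f nn_integral_dens_set by (intro integrableI_nonneg) (auto simp: dens_set_def intro: AE_I2)

lemma integral_dens_set: "integral\<^sup>L M f = 1"
  using nn_integral_eq_integral[OF integrable_dens_set] f nn_integral_dens_set
  by (auto simp: dens_set_def intro: AE_I2)

end

lemma dens_set_Qhat_integral_ge:
  assumes f: "f \<in> dens_set M (Qhat M Qs)" and X: "ess_bounded M X"
  shows "(INF Q'\<in>Qs. integral\<^sup>L Q' X) \<le> (\<integral>x. f x * X x \<partial>M)"
proof -
  have "(INF Q'\<in>Qs. integral\<^sup>L Q' X) \<le> integral\<^sup>L (density M (\<lambda>x. ennreal (f x))) X"
    using f X by (simp add: dens_set_def Qhat_def)
  also have "\<dots> = (\<integral>x. f x * X x \<partial>M)"
    using f X by (intro integral_real_density) (auto simp: dens_set_def ess_bounded_def intro: AE_I2)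
  finally show ?thesis .
qed

lemma L1_conv_nonneg_limit:
  fixes f :: "nat \<Rightarrow> 'a \<Rightarrow> real"
  assumes f: "\<And>n. integrable M (f n)" "\<And>n x. x \<in> space M \<Longrightarrow> 0 \<le> f n x"
    and g: "integrable M g" and conv: "L1_conv M f g"
  shows "AE x in M. 0 \<le> g x"
proof -
  have "(\<integral>x. max 0 (- g x) \<partial>M) \<le> L1_dist M (f n) g" for n
  proof (rule integral_mono)
    show "max 0 (- g x) \<le> \<bar>f n x - g x\<bar>" if "x \<in> space M" for x
      using f(2)[OF that, of n] by simp
  qed (use f g in auto)
  then have "(\<integral>x. max 0 (- g x) \<partial>M) \<le> 0"
    using conv unfolding L1_conv_def by (intro LIMSEQ_le_const) auto
  moreover have "0 \<le> (\<integral>x. max 0 (- g x) \<partial>M)"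
    by (intro integral_nonneg_AE) auto
  ultimately have "(\<integral>x. max 0 (- g x) \<partial>M) = 0"
    by simp
  then have "AE x in M. max 0 (- g x) = 0"
    using g by (subst (asm) integral_nonneg_eq_0_iff_AE) auto
  then show ?thesis by eventually_elim simp
qed

lemma ess_bounded_const: "ess_bounded M (\<lambda>_. c)"
  unfolding ess_bounded_def by (intro conjI exI[of _ "\<bar>c\<bar>"]) auto

text \<open>Integrals against essentially bounded variables pass to the limit, so the limit keeps
  total mass \<open>1\<close> and the inequalities defining \<open>Qhat M Qs\<close>.\<close>
lemma L1_limit_in_dens_set_Qhat:
  fixes f :: "nat \<Rightarrow> 'a \<Rightarrow> real"
  assumes F: "\<And>n. f n \<in> dens_set M (Qhat M Qs)"
    and h: "integrable M h" "\<And>x. 0 \<le> h x" and conv: "L1_conv M f h"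
  shows "h \<in> dens_set M (Qhat M Qs)"
proof -
  have f: "integrable M (f n)" for n
    using F prob_on_Qhat by (rule integrable_dens_set)
  have [measurable]: "h \<in> borel_measurable M"
    using h(1) by auto
  have lim: "(\<lambda>n. \<integral>x. f n x * X x \<partial>M) \<longlonglongrightarrow> (\<integral>x. h x * X x \<partial>M)" if "ess_bounded M X" for X
    using that L1_conv_integral_mult_tendsto[OF f h(1) conv] by (auto simp: ess_bounded_def)
  have "integral\<^sup>L M (f n) = 1" for n
    using F prob_on_Qhat by (rule integral_dens_set)
  with lim[OF ess_bounded_const[of M 1]] have "(\<lambda>n. 1) \<longlonglongrightarrow> (\<integral>x. h x \<partial>M)"
    by simp
  then have "(\<integral>\<^sup>+x. ennreal (h x) \<partial>M) = 1"
    using nn_integral_eq_integral[OF h(1)] h(2) LIMSEQ_unique[OF tendsto_const] by fastforce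
  then have "prob_on M (density M (\<lambda>x. ennreal (h x)))"
    by (auto intro!: prob_spaceI simp: prob_on_def emeasure_density)
  moreover have "(INF Q'\<in>Qs. integral\<^sup>L Q' X) \<le> integral\<^sup>L (density M (\<lambda>x. ennreal (h x))) X"
    if "ess_bounded M X" for X
  proof -
    have "(INF Q'\<in>Qs. integral\<^sup>L Q' X) \<le> (\<integral>x. h x * X x \<partial>M)"
      using dens_set_Qhat_integral_ge[OF F that] by (intro LIMSEQ_le_const[OF lim[OF that]]) auto
    also have "\<dots> = integral\<^sup>L (density M (\<lambda>x. ennreal (h x))) X"
      using that h(2) by (intro integral_real_density[symmetric]) (auto simp: ess_bounded_def)
    finally show ?thesis .
  qed
  ultimately show ?thesis
    using h(2) by (simp add: dens_set_def Qhat_def)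
qed

lemma L1_closed_dens_set_Qhat: "L1_closed M (dens_set M (Qhat M Qs))"
  unfolding L1_closed_def
proof (intro allI impI, elim conjE)
  fix f :: "nat \<Rightarrow> 'a \<Rightarrow> real" and g
  assume F: "\<forall>n. f n \<in> dens_set M (Qhat M Qs)" and g: "integrable M g" and conv: "L1_conv M f g"
  have f: "integrable M (f n)" for n
    using integrable_dens_set[OF F[rule_format] prob_on_Qhat] .
  have f_nonneg: "x \<in> space M \<Longrightarrow> 0 \<le> f n x" for n x
    using F by (auto simp: dens_set_def)
  define h where "h x = max 0 (g x)" for x
  have [measurable]: "g \<in> borel_measurable M" "h \<in> borel_measurable M"
    using g unfolding h_def by auto
  have h: "integrable M h" "\<And>x. 0 \<le> h x"
    using g unfolding h_def by auto
  have "AE x in M. 0 \<le> g x"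
    by (rule L1_conv_nonneg_limit[OF f f_nonneg g conv])
  then have g_eq_h: "AE x in M. g x = h x"
    by (rule eventually_mono) (simp add: h_def)
  with f have conv_h: "L1_conv M f h"
    by (intro L1_conv_AE_cong[OF conv]) auto
  have "h \<in> dens_set M (Qhat M Qs)"
    using F by (intro L1_limit_in_dens_set_Qhat[OF _ h conv_h]) blast
  with g_eq_h show "\<exists>h\<in>dens_set M (Qhat M Qs). AE x in M. g x = h x"
    by blast
qed

definition cell :: "'a measure \<Rightarrow> ('a \<Rightarrow> 'b) \<Rightarrow> 'b \<Rightarrow> 'a set" where
  "cell M \<phi> v = {x \<in> space M. \<phi> x = v}"

lemma cell_Int_space [simp]: "cell M \<phi> v \<inter> space M = cell M \<phi> v"
  by (auto simp: cell_def)

abbreviation cell_integral :: "'a measure \<Rightarrow> ('a \<Rightarrow> 'b) \<Rightarrow> ('a \<Rightarrow> real) \<Rightarrow> 'b \<Rightarrow> real" where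
  "cell_integral M \<phi> u v \<equiv> \<integral>x. u x * indicator (cell M \<phi> v) x \<partial>M"

text \<open>\<open>cell_cond_exp M \<phi> u\<close> is the conditional expectation of \<open>u\<close> given the partition of
  \<open>space M\<close> into the level sets of \<open>\<phi>\<close>; on a null cell the average is \<open>0\<close>, since \<open>x / 0 = 0\<close>.\<close>
definition cell_average :: "'a measure \<Rightarrow> ('a \<Rightarrow> 'b) \<Rightarrow> ('a \<Rightarrow> real) \<Rightarrow> 'b \<Rightarrow> real" where
  "cell_average M \<phi> u v = cell_integral M \<phi> u v / measure M (cell M \<phi> v)"

definition cell_cond_exp :: "'a measure \<Rightarrow> ('a \<Rightarrow> 'b) \<Rightarrow> ('a \<Rightarrow> real) \<Rightarrow> 'a \<Rightarrow> real" where
  "cell_cond_exp M \<phi> u x = (\<Sum>v\<in>\<phi> ` space M. cell_average M \<phi> u v * indicator (cell M \<phi> v) x)"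

lemma cell_cond_exp_outside: "x \<notin> space M \<Longrightarrow> cell_cond_exp M \<phi> u x = 0"
  by (simp add: cell_cond_exp_def cell_def)

locale finite_partition = finite_measure M for M :: "'a measure" +
  fixes \<phi> :: "'a \<Rightarrow> 'b"
  assumes finite_values: "finite (\<phi> ` space M)"
    and sets_cell: "cell M \<phi> v \<in> sets M"
begin

lemma sum_indicator_cell: "x \<in> space M \<Longrightarrow> (\<Sum>v\<in>\<phi> ` space M. c v * indicator (cell M \<phi> v) x :: real) = c (\<phi> x)"
  using finite_values by (simp add: cell_def indicator_def if_distrib[of "(*) _"] sum.delta')

lemma cell_cond_exp_eq: "x \<in> space M \<Longrightarrow> cell_cond_exp M \<phi> u x = cell_average M \<phi> u (\<phi> x)"
  unfolding cell_cond_exp_def by (rule sum_indicator_cell)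

lemma integrable_indicator_cell: "integrable M (indicator (cell M \<phi> v) :: 'a \<Rightarrow> real)"
  using sets_cell by (intro integrable_real_indicator) (auto simp: less_top[symmetric] emeasure_finite)

lemma integrable_mult_indicator_cell:
  "integrable M u \<Longrightarrow> integrable M (\<lambda>x. u x * indicator (cell M \<phi> v) x :: real)"
  using integrable_real_mult_indicator[OF sets_cell] by blast

lemma borel_measurable_cell_cond_exp [measurable]: "cell_cond_exp M \<phi> u \<in> borel_measurable M"
  unfolding cell_cond_exp_def[abs_def] using sets_cell by measurable

lemma integrable_cell_cond_exp: "integrable M (cell_cond_exp M \<phi> u)"
  unfolding cell_cond_exp_def[abs_def] using integrable_indicator_cell by auto

lemma cell_integral_null_cell:
  assumes "measure M (cell M \<phi> v) = 0"
  shows "cell_integral M \<phi> u v = 0"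
proof (rule integral_eq_zero_AE)
  have "cell M \<phi> v \<in> null_sets M"
    using assms sets_cell by (simp add: emeasure_eq_measure null_sets_def)
  then show "AE x in M. u x * indicator (cell M \<phi> v) x = 0"
    by (rule AE_not_in[THEN eventually_mono]) simp
qed

lemma cell_average_mult_measure:
  "cell_average M \<phi> u v * measure M (cell M \<phi> v) = cell_integral M \<phi> u v"
  by (cases "measure M (cell M \<phi> v) = 0") (simp_all add: cell_average_def cell_integral_null_cell)

lemma cell_cond_exp_diff:
  assumes "integrable M u" "integrable M w"
  shows "cell_cond_exp M \<phi> (\<lambda>x. u x - w x) x = cell_cond_exp M \<phi> u x - cell_cond_exp M \<phi> w x"
proof -
  have "cell_integral M \<phi> (\<lambda>x. u x - w x) v = cell_integral M \<phi> u v - cell_integral M \<phi> w v" for v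
    using integrable_mult_indicator_cell[OF assms(1)] integrable_mult_indicator_cell[OF assms(2)]
    by (simp add: left_diff_distrib)
  then show ?thesis
    by (simp add: cell_cond_exp_def cell_average_def diff_divide_distrib left_diff_distrib sum_subtractf)
qed

lemma integral_cell_cond_exp_mult:
  fixes u X :: "'a \<Rightarrow> real"
  assumes "integrable M X"
  shows "(\<integral>x. cell_cond_exp M \<phi> u x * X x \<partial>M) =
    (\<Sum>v\<in>\<phi> ` space M. cell_integral M \<phi> u v * cell_integral M \<phi> X v / measure M (cell M \<phi> v))"
proof -
  have "(\<integral>x. cell_cond_exp M \<phi> u x * X x \<partial>M) =
      (\<integral>x. (\<Sum>v\<in>\<phi> ` space M. cell_average M \<phi> u v * (X x * indicator (cell M \<phi> v) x)) \<partial>M)"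
    unfolding cell_cond_exp_def sum_distrib_right by (simp add: mult_ac)
  also have "\<dots> = (\<Sum>v\<in>\<phi> ` space M. cell_average M \<phi> u v * cell_integral M \<phi> X v)"
    using integrable_mult_indicator_cell[OF assms] by (simp add: Bochner_Integration.integral_sum)
  finally show ?thesis by (simp add: cell_average_def)
qed

lemma cell_cond_exp_self_adjoint:
  fixes u X :: "'a \<Rightarrow> real"
  assumes "integrable M u" "integrable M X"
  shows "(\<integral>x. cell_cond_exp M \<phi> u x * X x \<partial>M) = (\<integral>x. u x * cell_cond_exp M \<phi> X x \<partial>M)"
  using integral_cell_cond_exp_mult[OF assms(1), of X] integral_cell_cond_exp_mult[OF assms(2), of u]
  by (simp add: mult.commute)

lemma sum_abs_cell_integral_le:
  fixes u :: "'a \<Rightarrow> real"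
  assumes u: "integrable M u"
  shows "(\<Sum>v\<in>\<phi> ` space M. \<bar>cell_integral M \<phi> u v\<bar>) \<le> (\<integral>x. \<bar>u x\<bar> \<partial>M)"
proof -
  have "(\<Sum>v\<in>\<phi> ` space M. \<bar>cell_integral M \<phi> u v\<bar>) \<le> (\<Sum>v\<in>\<phi> ` space M. cell_integral M \<phi> (\<lambda>x. \<bar>u x\<bar>) v)"
    by (intro sum_mono order_trans[OF integral_abs_bound]) (simp add: abs_mult)
  also have "\<dots> = (\<integral>x. (\<Sum>v\<in>\<phi> ` space M. \<bar>u x\<bar> * indicator (cell M \<phi> v) x) \<partial>M)"
    using integrable_mult_indicator_cell[OF integrable_abs[OF u]]
    by (simp add: Bochner_Integration.integral_sum)
  also have "\<dots> = (\<integral>x. \<bar>u x\<bar> \<partial>M)"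
    using sum_indicator_cell[of _ "\<lambda>_. 1"] by (intro Bochner_Integration.integral_cong) (simp_all add: sum_distrib_left[symmetric])
  finally show ?thesis .
qed

lemma L1_cell_cond_exp_le_sum:
  fixes u :: "'a \<Rightarrow> real"
  shows "(\<integral>x. \<bar>cell_cond_exp M \<phi> u x\<bar> \<partial>M) \<le> (\<Sum>v\<in>\<phi> ` space M. \<bar>cell_integral M \<phi> u v\<bar>)"
proof -
  have "(\<integral>x. \<bar>cell_cond_exp M \<phi> u x\<bar> \<partial>M) \<le>
      (\<integral>x. (\<Sum>v\<in>\<phi> ` space M. \<bar>cell_average M \<phi> u v\<bar> * indicator (cell M \<phi> v) x) \<partial>M)"
  proof (rule integral_mono)
    show "integrable M (\<lambda>x. \<bar>cell_cond_exp M \<phi> u x\<bar>)"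
      using integrable_cell_cond_exp by (rule integrable_abs)
    show "integrable M (\<lambda>x. \<Sum>v\<in>\<phi> ` space M. \<bar>cell_average M \<phi> u v\<bar> * indicator (cell M \<phi> v) x)"
      using integrable_indicator_cell by (intro Bochner_Integration.integrable_sum) auto
    show "\<bar>cell_cond_exp M \<phi> u x\<bar> \<le> (\<Sum>v\<in>\<phi> ` space M. \<bar>cell_average M \<phi> u v\<bar> * indicator (cell M \<phi> v) x)" for x
      unfolding cell_cond_exp_def by (rule order_trans[OF sum_abs]) (simp add: abs_mult)
  qed
  also have "\<dots> = (\<Sum>v\<in>\<phi> ` space M. \<bar>cell_average M \<phi> u v * measure M (cell M \<phi> v)\<bar>)"
    using integrable_indicator_cell by (simp add: Bochner_Integration.integral_sum abs_mult)
  finally show ?thesis by (simp add: cell_average_mult_measure)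
qed

lemma L1_cell_cond_exp_le: "integrable M u \<Longrightarrow> (\<integral>x. \<bar>cell_cond_exp M \<phi> u x\<bar> \<partial>M) \<le> (\<integral>x. \<bar>u x\<bar> \<partial>M)"
  using L1_cell_cond_exp_le_sum sum_abs_cell_integral_le by (rule order_trans)

lemma abs_cell_cond_exp_le:
  fixes X :: "'a \<Rightarrow> real"
  assumes X: "X \<in> borel_measurable M" "AE x in M. \<bar>X x\<bar> \<le> C"
  shows "\<bar>cell_cond_exp M \<phi> X x\<bar> \<le> \<bar>C\<bar>"
proof (cases "x \<in> space M \<and> measure M (cell M \<phi> (\<phi> x)) \<noteq> 0")
  case True
  let ?A = "cell M \<phi> (\<phi> x)"
  have "\<bar>cell_integral M \<phi> X (\<phi> x)\<bar> \<le> \<bar>C\<bar> * (\<integral>y. \<bar>indicator ?A y :: real\<bar> \<partial>M)"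
    using abs_integral_mult_ess_bounded_le[OF integrable_indicator_cell X] by (simp add: mult.commute)
  also have "\<dots> = \<bar>C\<bar> * measure M ?A"
    using sets_cell by simp
  finally show ?thesis
    using True by (simp add: cell_cond_exp_eq cell_average_def divide_le_eq zero_less_measure_iff)
next
  case False
  then have "cell_cond_exp M \<phi> X x = 0"
    by (cases "x \<in> space M") (simp_all add: cell_cond_exp_eq cell_cond_exp_outside cell_average_def)
  then show ?thesis by simp
qed

lemma AE_measure_cell_nonzero: "AE x in M. measure M (cell M \<phi> (\<phi> x)) \<noteq> 0"
proof -
  have "AE x in M. \<forall>v\<in>\<phi> ` space M. x \<in> cell M \<phi> v \<longrightarrow> measure M (cell M \<phi> v) \<noteq> 0"
  proof (subst eventually_ball_finite_distrib[OF finite_values], intro ballI)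
    fix v
    show "AE x in M. x \<in> cell M \<phi> v \<longrightarrow> measure M (cell M \<phi> v) \<noteq> 0"
    proof (cases "measure M (cell M \<phi> v) = 0")
      case True
      then have "cell M \<phi> v \<in> null_sets M"
        using sets_cell by (simp add: emeasure_eq_measure null_sets_def)
      then show ?thesis by (rule AE_not_in[THEN eventually_mono]) simp
    qed simp
  qed
  then show ?thesis by (rule AE_mp[OF _ AE_I2]) (auto simp: cell_def)
qed

lemma AE_cell_cond_exp_eq:
  fixes s :: "'a \<Rightarrow> real"
  assumes const: "\<And>x y. x \<in> space M \<Longrightarrow> y \<in> space M \<Longrightarrow> \<phi> y = \<phi> x \<Longrightarrow> s y = s x"
  shows "AE x in M. cell_cond_exp M \<phi> s x = s x"
  using AE_measure_cell_nonzero
proof (rule AE_mp[OF _ AE_I2[OF impI]])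
  fix x assume x: "x \<in> space M" and nonzero: "measure M (cell M \<phi> (\<phi> x)) \<noteq> 0"
  have "cell_integral M \<phi> s (\<phi> x) = (\<integral>y. s x * indicator (cell M \<phi> (\<phi> x)) y \<partial>M)"
    using const[OF x] by (intro Bochner_Integration.integral_cong) (auto simp: indicator_def cell_def)
  also have "\<dots> = s x * measure M (cell M \<phi> (\<phi> x))"
    using sets_cell by simp
  finally show "cell_cond_exp M \<phi> s x = s x"
    using x nonzero by (simp add: cell_cond_exp_eq cell_average_def)
qed

lemma L1_dist_cell_cond_exp:
  fixes u w :: "'a \<Rightarrow> real"
  assumes "integrable M u" "integrable M w"
  shows "L1_dist M (cell_cond_exp M \<phi> u) (cell_cond_exp M \<phi> w) =
    (\<integral>x. \<bar>cell_cond_exp M \<phi> (\<lambda>y. u y - w y) x\<bar> \<partial>M)"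
  using cell_cond_exp_diff[OF assms] by simp

lemma L1_dist_cell_cond_exp_le:
  fixes k k' :: "'a \<Rightarrow> real"
  assumes k: "integrable M k" and k': "integrable M k'"
  shows "L1_dist M k (cell_cond_exp M \<phi> k) \<le>
    2 * L1_dist M k k' + L1_dist M k' (cell_cond_exp M \<phi> k')"
proof -
  note P = integrable_cell_cond_exp
  have "L1_dist M k (cell_cond_exp M \<phi> k) \<le>
      L1_dist M k k' + (L1_dist M k' (cell_cond_exp M \<phi> k') +
        L1_dist M (cell_cond_exp M \<phi> k') (cell_cond_exp M \<phi> k))"
    using L1_dist_triangle[OF k k' P[of k]] L1_dist_triangle[OF k' P[of k'] P[of k]] by linarith
  moreover have "L1_dist M (cell_cond_exp M \<phi> k') (cell_cond_exp M \<phi> k) \<le> L1_dist M k' k"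
    unfolding L1_dist_cell_cond_exp[OF k' k] using k k' by (intro L1_cell_cond_exp_le) auto
  ultimately show ?thesis using L1_dist_commute[of M k' k] by linarith
qed

lemma L1_dist_cell_cond_exp_le_cell_constant:
  fixes k s :: "'a \<Rightarrow> real"
  assumes k: "integrable M k" and s: "integrable M s"
    and const: "\<And>x y. x \<in> space M \<Longrightarrow> y \<in> space M \<Longrightarrow> \<phi> y = \<phi> x \<Longrightarrow> s y = s x"
  shows "L1_dist M k (cell_cond_exp M \<phi> k) \<le> 2 * L1_dist M k s"
proof -
  have "AE x in M. cell_cond_exp M \<phi> s x = s x"
    by (rule AE_cell_cond_exp_eq) (rule const)
  then have "AE x in M. \<bar>s x - cell_cond_exp M \<phi> s x\<bar> = 0"
    by (rule eventually_mono) simp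
  then have "L1_dist M s (cell_cond_exp M \<phi> s) = 0"
    by (rule integral_eq_zero_AE)
  then show ?thesis using L1_dist_cell_cond_exp_le[OF k s] by simp
qed

lemma L1_dist_le_cell_integrals:
  fixes u w :: "'a \<Rightarrow> real"
  assumes u: "integrable M u" and w: "integrable M w"
  shows "L1_dist M u w \<le> L1_dist M u (cell_cond_exp M \<phi> u) + L1_dist M w (cell_cond_exp M \<phi> w) +
    (\<Sum>v\<in>\<phi> ` space M. \<bar>cell_integral M \<phi> u v - cell_integral M \<phi> w v\<bar>)"
proof -
  note P = integrable_cell_cond_exp
  have "(\<Sum>v\<in>\<phi> ` space M. \<bar>cell_integral M \<phi> (\<lambda>x. u x - w x) v\<bar>) =
      (\<Sum>v\<in>\<phi> ` space M. \<bar>cell_integral M \<phi> u v - cell_integral M \<phi> w v\<bar>)"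
    using integrable_mult_indicator_cell[OF u] integrable_mult_indicator_cell[OF w]
    by (simp add: left_diff_distrib)
  then have "L1_dist M (cell_cond_exp M \<phi> u) (cell_cond_exp M \<phi> w) \<le>
      (\<Sum>v\<in>\<phi> ` space M. \<bar>cell_integral M \<phi> u v - cell_integral M \<phi> w v\<bar>)"
    using L1_cell_cond_exp_le_sum[of "\<lambda>x. u x - w x"] by (simp add: L1_dist_cell_cond_exp[OF u w])
  then show ?thesis
    using L1_dist_triangle[OF u P[of u] w] L1_dist_triangle[OF P[of u] P[of w] w]
      L1_dist_commute[of M w "cell_cond_exp M \<phi> w"] by linarith
qed

lemma integral_mult_sub_cell_cond_exp:
  fixes g X :: "'a \<Rightarrow> real"
  assumes g: "integrable M g" and X: "integrable M X" "AE x in M. \<bar>X x\<bar> \<le> C"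
  shows "(\<integral>x. g x * (X x - cell_cond_exp M \<phi> X x) \<partial>M) = (\<integral>x. (g x - cell_cond_exp M \<phi> g x) * X x \<partial>M)"
proof -
  have Xm: "X \<in> borel_measurable M" using X(1) by auto
  have gX: "integrable M (\<lambda>x. g x * X x)"
    by (rule integrable_mult_ess_bounded[OF g Xm X(2)])
  have gPX: "integrable M (\<lambda>x. g x * cell_cond_exp M \<phi> X x)"
    by (rule integrable_mult_ess_bounded[OF g borel_measurable_cell_cond_exp])
       (rule AE_I2, rule abs_cell_cond_exp_le[OF Xm X(2)])
  have PgX: "integrable M (\<lambda>x. cell_cond_exp M \<phi> g x * X x)"
    by (rule integrable_mult_ess_bounded[OF integrable_cell_cond_exp Xm X(2)])
  have "(\<integral>x. g x * (X x - cell_cond_exp M \<phi> X x) \<partial>M) =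
      (\<integral>x. g x * X x \<partial>M) - (\<integral>x. g x * cell_cond_exp M \<phi> X x \<partial>M)"
    using gX gPX by (simp add: right_diff_distrib)
  also have "(\<integral>x. g x * cell_cond_exp M \<phi> X x \<partial>M) = (\<integral>x. cell_cond_exp M \<phi> g x * X x \<partial>M)"
    by (rule cell_cond_exp_self_adjoint[OF g X(1), symmetric])
  also have "(\<integral>x. g x * X x \<partial>M) - \<dots> = (\<integral>x. (g x - cell_cond_exp M \<phi> g x) * X x \<partial>M)"
    using gX PgX by (simp add: left_diff_distrib)
  finally show ?thesis .
qed

end

lemma integrable_simple_function_approx:
  fixes k :: "'a \<Rightarrow> real"
  assumes k: "integrable M k" and "0 < \<delta>"
  shows "\<exists>s. simple_function M s \<and> integrable M s \<and> L1_dist M k s \<le> \<delta>"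
proof -
  from k obtain I where "has_bochner_integral M k I" by (auto elim: integrable.cases)
  then obtain s where s: "\<And>i. Bochner_Integration.simple_bochner_integrable M (s i)"
    and lim: "(\<lambda>i. \<integral>\<^sup>+x. norm (k x - s i x) \<partial>M) \<longlonglongrightarrow> 0"
    by (cases rule: has_bochner_integral.cases) blast
  from order_tendstoD(2)[OF lim, of "ennreal \<delta>"] \<open>0 < \<delta>\<close> obtain i
    where less: "(\<integral>\<^sup>+x. norm (k x - s i x) \<partial>M) < ennreal \<delta>"
    by (auto simp: eventually_sequentially)
  have si: "integrable M (s i)"
    using has_bochner_integral_simple_bochner_integrable[OF s] by (rule integrable.intros)
  have "ennreal (L1_dist M k (s i)) < ennreal \<delta>"
    using less k si by (subst nn_integral_eq_integral[symmetric]) auto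
  then have "L1_dist M k (s i) \<le> \<delta>"
    using \<open>0 < \<delta>\<close> by (simp add: ennreal_less_iff)
  moreover have "simple_function M (s i)"
    using s[of i] by (auto elim: Bochner_Integration.simple_bochner_integrable.cases)
  ultimately show ?thesis using si by blast
qed

lemma finite_partition_simple_functions:
  assumes M: "finite_measure M" and N: "finite N" and s: "\<And>i. i \<in> N \<Longrightarrow> simple_function M (s i)"
  shows "finite_partition M (\<lambda>x. \<lambda>i\<in>N. s i x)"
proof -
  define \<phi> where "\<phi> x = (\<lambda>i\<in>N. s i x)" for x
  have "\<phi> ` space M \<subseteq> PiE N (\<lambda>i. s i ` space M)"
    by (auto simp: \<phi>_def)
  moreover have "finite (PiE N (\<lambda>i. s i ` space M))"
    using N s by (intro finite_PiE) (auto dest: simple_functionD(1))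
  ultimately have "finite (\<phi> ` space M)"
    by (rule finite_subset)
  moreover have "cell M \<phi> v \<in> sets M" for v
  proof (cases "v \<in> \<phi> ` space M")
    case True
    then obtain x where "x \<in> space M" "v = \<phi> x" by auto
    then have "cell M \<phi> v = {y \<in> space M. \<forall>i\<in>N. s i y = s i x}"
      by (auto simp: cell_def \<phi>_def fun_eq_iff restrict_def)
    also have "\<dots> \<in> sets M"
    proof (rule sets.sets_Collect_finite_All[OF _ N])
      fix i assume "i \<in> N"
      have "{y \<in> space M. s i y = s i x} = s i -` {s i x} \<inter> space M" by auto
      then show "{y \<in> space M. s i y = s i x} \<in> sets M"
        using s[OF \<open>i \<in> N\<close>] by (auto intro: simple_functionD(2))
    qed
    finally show ?thesis .
  next
    case False
    then have "cell M \<phi> v = {}" by (auto simp: cell_def)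
    then show ?thesis by simp
  qed
  ultimately have "finite_partition M \<phi>"
    using M by (simp add: finite_partition_def finite_partition_axioms_def)
  then show ?thesis unfolding \<phi>_def .
qed

lemma finite_partition_approx:
  fixes k :: "'i \<Rightarrow> 'a \<Rightarrow> real"
  assumes M: "finite_measure M" and N: "finite N" and k: "\<And>i. i \<in> N \<Longrightarrow> integrable M (k i)"
    and "0 < \<delta>"
  shows "\<exists>\<phi> :: 'a \<Rightarrow> ('i \<Rightarrow> real). finite_partition M \<phi> \<and>
    (\<forall>i\<in>N. L1_dist M (k i) (cell_cond_exp M \<phi> (k i)) \<le> \<delta>)"
proof -
  have "\<exists>s. simple_function M s \<and> integrable M s \<and> L1_dist M (k i) s \<le> \<delta> / 2" if "i \<in> N" for i
    using \<open>0 < \<delta>\<close> by (intro integrable_simple_function_approx k that) simp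
  then obtain s where s: "\<And>i. i \<in> N \<Longrightarrow> simple_function M (s i) \<and> integrable M (s i) \<and> L1_dist M (k i) (s i) \<le> \<delta> / 2"
    by metis
  define \<phi> where "\<phi> x = (\<lambda>i\<in>N. s i x)" for x
  interpret finite_partition M \<phi>
    unfolding \<phi>_def using M N s by (intro finite_partition_simple_functions) auto
  have "L1_dist M (k i) (cell_cond_exp M \<phi> (k i)) \<le> \<delta>" if "i \<in> N" for i
  proof -
    have s_i: "integrable M (s i)" "L1_dist M (k i) (s i) \<le> \<delta> / 2"
      using s[OF that] by auto
    have "L1_dist M (k i) (cell_cond_exp M \<phi> (k i)) \<le> 2 * L1_dist M (k i) (s i)"
    proof (rule L1_dist_cell_cond_exp_le_cell_constant[OF k[OF that] s_i(1)])
      show "s i y = s i x" if "\<phi> y = \<phi> x" for x y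
        using fun_cong[OF that, of i] \<open>i \<in> N\<close> by (simp add: \<phi>_def)
    qed
    with s_i(2) show ?thesis by simp
  qed
  then show ?thesis using finite_partition_axioms by blast
qed

definition real_RN_deriv :: "'a measure \<Rightarrow> 'a measure \<Rightarrow> 'a \<Rightarrow> real" where
  "real_RN_deriv M Q x = enn2real (RN_deriv M Q x)"

lemma borel_measurable_real_RN_deriv [measurable]: "real_RN_deriv M Q \<in> borel_measurable M"
  unfolding real_RN_deriv_def[abs_def] by measurable

lemma real_RN_deriv_nonneg: "0 \<le> real_RN_deriv M Q x"
  by (simp add: real_RN_deriv_def)

context
  fixes M Q :: "'a measure"
  assumes M: "sigma_finite_measure M" and Q: "prob_on M Q" "absolutely_continuous M Q"
begin

lemma density_real_RN_deriv: "density M (\<lambda>x. ennreal (real_RN_deriv M Q x)) = Q"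
proof -
  interpret sigma_finite_measure M by (rule M)
  have sets: "sets Q = sets M" and "prob_space Q" using Q by (auto simp: prob_on_def)
  then have "AE x in M. RN_deriv M Q x \<noteq> \<infinity>"
    by (intro RN_deriv_finite prob_space_imp_sigma_finite Q(2))
  then have "density M (\<lambda>x. ennreal (real_RN_deriv M Q x)) = density M (RN_deriv M Q)"
    by (intro density_cong) (auto simp: real_RN_deriv_def less_top elim!: eventually_mono)
  also have "\<dots> = Q" by (rule density_RN_deriv[OF Q(2) sets])
  finally show ?thesis .
qed

lemma real_RN_deriv_in_dens_set: "real_RN_deriv M Q \<in> dens_set M {Q}"
  by (simp add: dens_set_def density_real_RN_deriv real_RN_deriv_nonneg)

lemma integrable_real_RN_deriv: "integrable M (real_RN_deriv M Q)"
  using real_RN_deriv_in_dens_set by (rule integrable_dens_set) (use Q in simp)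

lemma integral_real_RN_deriv:
  "X \<in> borel_measurable M \<Longrightarrow> integral\<^sup>L Q X = (\<integral>x. real_RN_deriv M Q x * X x \<partial>M)"
  using integral_real_density[of "real_RN_deriv M Q" M X]
  by (simp add: density_real_RN_deriv real_RN_deriv_nonneg)

lemma measure_real_RN_deriv:
  assumes "A \<in> sets M"
  shows "measure Q A = (\<integral>x. real_RN_deriv M Q x * indicator A x \<partial>M)"
proof -
  have "sets Q = sets M" using Q by (simp add: prob_on_def)
  then have "measure Q A = integral\<^sup>L Q (indicator A :: 'a \<Rightarrow> real)"
    using assms sets.sets_into_space[OF assms] sets_eq_imp_space_eq by (simp add: Int_absorb2)
  also have "\<dots> = (\<integral>x. real_RN_deriv M Q x * indicator A x \<partial>M)"
    using assms by (intro integral_real_RN_deriv) simp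
  finally show ?thesis .
qed

end

lemma abs_measure_diff_le_d_tv:
  assumes "prob_on M Q1" "prob_on M Q2" "A \<in> sets M"
  shows "\<bar>measure Q1 A - measure Q2 A\<bar> \<le> d_tv M Q1 Q2"
  unfolding d_tv_def
proof (rule cSUP_upper[OF assms(3)], rule bdd_aboveI2)
  fix B
  have "prob_space Q1" "prob_space Q2" using assms by (auto simp: prob_on_def)
  then show "\<bar>measure Q1 B - measure Q2 B\<bar> \<le> 1"
    using prob_space.prob_le_1[of Q1 B] prob_space.prob_le_1[of Q2 B]
      measure_nonneg[of Q1 B] measure_nonneg[of Q2 B] by linarith
qed

lemma d_tv_triangle:
  assumes "prob_on M Q1" "prob_on M Q2" "prob_on M Q0"
  shows "d_tv M Q1 Q2 \<le> d_tv M Q1 Q0 + d_tv M Q2 Q0"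
  unfolding d_tv_def[of M Q1 Q2]
proof (rule cSUP_least)
  show "sets M \<noteq> {}" using sets.top[of M] by blast
  fix A assume "A \<in> sets M"
  then show "\<bar>measure Q1 A - measure Q2 A\<bar> \<le> d_tv M Q1 Q0 + d_tv M Q2 Q0"
    using abs_measure_diff_le_d_tv[OF assms(1,3)] abs_measure_diff_le_d_tv[OF assms(2,3)] by fastforce
qed

text \<open>Split the integral along the set where the first density dominates the second.\<close>
lemma L1_dist_real_RN_deriv_le_d_tv:
  assumes M: "sigma_finite_measure M"
    and Q1: "prob_on M Q1" "absolutely_continuous M Q1" and Q2: "prob_on M Q2" "absolutely_continuous M Q2"
  shows "L1_dist M (real_RN_deriv M Q1) (real_RN_deriv M Q2) \<le> 2 * d_tv M Q1 Q2"
proof -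
  define A where "A = {x \<in> space M. real_RN_deriv M Q2 x \<le> real_RN_deriv M Q1 x}"
  define B where "B = space M - A"
  have [measurable]: "A \<in> sets M" "B \<in> sets M" unfolding A_def B_def by measurable
  note k = integrable_real_RN_deriv[OF M Q1] integrable_real_RN_deriv[OF M Q2]
  have "L1_dist M (real_RN_deriv M Q1) (real_RN_deriv M Q2) =
      (\<integral>x. (real_RN_deriv M Q1 x * indicator A x - real_RN_deriv M Q2 x * indicator A x)
         - (real_RN_deriv M Q1 x * indicator B x - real_RN_deriv M Q2 x * indicator B x) \<partial>M)"
    by (intro Bochner_Integration.integral_cong) (auto simp: A_def B_def indicator_def)
  also have "\<dots> = (measure Q1 A - measure Q2 A) - (measure Q1 B - measure Q2 B)"
    using k by (simp add: measure_real_RN_deriv[OF M Q1] measure_real_RN_deriv[OF M Q2] integrable_real_mult_indicator)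
  also have "\<dots> \<le> 2 * d_tv M Q1 Q2"
    using abs_measure_diff_le_d_tv[OF Q1(1) Q2(1), of A] abs_measure_diff_le_d_tv[OF Q1(1) Q2(1), of B]
    by simp
  finally show ?thesis .
qed

fun greedy_list :: "('b list \<Rightarrow> 'b) \<Rightarrow> nat \<Rightarrow> 'b list" where
  "greedy_list c 0 = []"
| "greedy_list c (Suc n) = greedy_list c n @ [c (greedy_list c n)]"

lemma greedy_list_mem: "m < n \<Longrightarrow> c (greedy_list c m) \<in> set (greedy_list c n)"
  by (induction n) (auto simp: less_Suc_eq)

lemma greedy_list_subset: "(\<And>L. set L \<subseteq> S \<Longrightarrow> c L \<in> S) \<Longrightarrow> set (greedy_list c n) \<subseteq> S"
  by (induction n) auto

text \<open>Otherwise a greedy choice produces a sequence in \<open>Qs\<close> whose densities are pairwise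
  \<open>\<delta>\<close>-apart in \<open>L\<^sup>1\<close>, hence pairwise \<open>\<delta>/2\<close>-apart in total variation, and it has no
  convergent subsequence.\<close>
lemma tv_relcompact_imp_L1_totally_bounded:
  assumes M: "prob_space M" and Qs: "\<And>Q. Q \<in> Qs \<Longrightarrow> prob_on M Q \<and> absolutely_continuous M Q"
    and tv: "tv_relcompact M Qs" and "0 < \<delta>"
  shows "\<exists>N. finite N \<and> N \<subseteq> Qs \<and>
    (\<forall>Q\<in>Qs. \<exists>Q'\<in>N. L1_dist M (real_RN_deriv M Q) (real_RN_deriv M Q') \<le> \<delta>)"
proof (rule ccontr)
  define D where "D Q Q' = L1_dist M (real_RN_deriv M Q) (real_RN_deriv M Q')" for Q Q'
  assume "\<not> ?thesis"
  then have far: "\<exists>Q\<in>Qs. \<forall>Q'\<in>N. \<delta> < D Q Q'" if "finite N" "N \<subseteq> Qs" for N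
    using that unfolding D_def by (meson not_le)
  define c where "c L = (SOME Q. Q \<in> Qs \<and> (\<forall>Q'\<in>set L. \<delta> < D Q Q'))" for L
  have c: "c L \<in> Qs \<and> (\<forall>Q'\<in>set L. \<delta> < D (c L) Q')" if "set L \<subseteq> Qs" for L
    unfolding c_def by (rule someI_ex) (use far[OF finite_set that] in blast)
  have greedy: "set (greedy_list c n) \<subseteq> Qs" for n
    by (rule greedy_list_subset) (use c in blast)
  define q where "q n = c (greedy_list c n)" for n
  have q_Qs: "q n \<in> Qs" for n
    using c[OF greedy] by (simp add: q_def)
  have q_far: "\<delta> < D (q n) (q m)" if "m < n" for m n
    using c[OF greedy] greedy_list_mem[OF that, of c] by (simp add: q_def)
  have q: "prob_on M (q n)" "absolutely_continuous M (q n)" for n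
    using Qs[OF q_Qs] by auto
  obtain r Q0 where r: "strict_mono r" and Q0: "prob_on M Q0"
    and lim: "(\<lambda>n. d_tv M (q (r n)) Q0) \<longlonglongrightarrow> 0"
    using tv q_Qs unfolding tv_relcompact_def by blast
  have "\<forall>\<^sub>F m in sequentially. d_tv M (q (r m)) Q0 < \<delta> / 4"
    using lim by (rule order_tendstoD) (use \<open>0 < \<delta>\<close> in simp)
  then obtain n where n: "\<And>m. m \<ge> n \<Longrightarrow> d_tv M (q (r m)) Q0 < \<delta> / 4"
    unfolding eventually_sequentially by blast
  have "D (q (r (Suc n))) (q (r n)) \<le> 2 * d_tv M (q (r (Suc n))) (q (r n))"
    unfolding D_def using M by (intro L1_dist_real_RN_deriv_le_d_tv q prob_space_imp_sigma_finite)
  also have "\<dots> \<le> 2 * (d_tv M (q (r (Suc n))) Q0 + d_tv M (q (r n)) Q0)"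
    using d_tv_triangle[OF q(1) q(1) Q0, of "r (Suc n)" "r n"] by simp
  also have "\<dots> < \<delta>"
    using n[of n] n[of "Suc n"] by simp
  finally show False
    using q_far[of "r n" "r (Suc n)"] r by (simp add: strict_mono_def)
qed

lemma uniform_cell_approx_real_RN_deriv:
  assumes M: "prob_space M" and Qs: "\<And>Q. Q \<in> Qs \<Longrightarrow> prob_on M Q \<and> absolutely_continuous M Q"
    and tv: "tv_relcompact M Qs" and "0 < \<epsilon>"
  shows "\<exists>\<phi> :: 'a \<Rightarrow> ('a measure \<Rightarrow> real). finite_partition M \<phi> \<and>
    (\<forall>Q\<in>Qs. L1_dist M (real_RN_deriv M Q) (cell_cond_exp M \<phi> (real_RN_deriv M Q)) \<le> \<epsilon>)"
proof -
  have M': "sigma_finite_measure M" "finite_measure M"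
    using M by (auto intro: prob_space_imp_sigma_finite prob_space.finite_measure)
  have k: "integrable M (real_RN_deriv M Q)" if "Q \<in> Qs" for Q
    using Qs[OF that] by (intro integrable_real_RN_deriv M') auto
  obtain N where N: "finite N" "N \<subseteq> Qs"
    and close: "\<And>Q. Q \<in> Qs \<Longrightarrow> \<exists>Q'\<in>N. L1_dist M (real_RN_deriv M Q) (real_RN_deriv M Q') \<le> \<epsilon> / 4"
    using tv_relcompact_imp_L1_totally_bounded[OF M Qs tv, of "\<epsilon> / 4"] \<open>0 < \<epsilon>\<close> by auto
  have "\<exists>\<phi> :: 'a \<Rightarrow> ('a measure \<Rightarrow> real). finite_partition M \<phi> \<and>
      (\<forall>Q'\<in>N. L1_dist M (real_RN_deriv M Q') (cell_cond_exp M \<phi> (real_RN_deriv M Q')) \<le> \<epsilon> / 2)"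
    by (rule finite_partition_approx[OF M'(2) N(1)]) (use k N(2) \<open>0 < \<epsilon>\<close> in auto)
  then obtain \<phi> :: "'a \<Rightarrow> ('a measure \<Rightarrow> real)" where "finite_partition M \<phi>"
    and approx: "\<And>Q'. Q' \<in> N \<Longrightarrow> L1_dist M (real_RN_deriv M Q') (cell_cond_exp M \<phi> (real_RN_deriv M Q')) \<le> \<epsilon> / 2"
    by blast
  interpret finite_partition M \<phi> by fact
  have "L1_dist M (real_RN_deriv M Q) (cell_cond_exp M \<phi> (real_RN_deriv M Q)) \<le> \<epsilon>" if Q: "Q \<in> Qs" for Q
  proof -
    obtain Q' where "Q' \<in> N" and "L1_dist M (real_RN_deriv M Q) (real_RN_deriv M Q') \<le> \<epsilon> / 4"
      using close[OF Q] by blast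
    then show ?thesis
      using L1_dist_cell_cond_exp_le[OF k[OF Q] k, of Q'] approx[of Q'] N(2) by auto
  qed
  then show ?thesis using finite_partition_axioms by blast
qed

text \<open>Test the inequality defining \<open>Qhat M Qs\<close> against \<open>-Y\<close>, where \<open>Y = X - E[X|\<phi>]\<close> and
  \<open>X = sgn (f - E[f|\<phi>])\<close>. Self-adjointness gives \<open>\<integral>g Y = \<integral>(g - E[g|\<phi>]) X\<close>: this is the
  projection error of \<open>f\<close> for \<open>g = f\<close>, and at most \<open>\<epsilon>\<close> for the densities \<open>g\<close> of \<open>Qs\<close>.\<close>
lemma (in finite_partition) L1_dist_cell_cond_exp_dens_set_Qhat_le:
  assumes Qne: "Qs \<noteq> {}" and Qs: "\<And>Q. Q \<in> Qs \<Longrightarrow> prob_on M Q \<and> absolutely_continuous M Q"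
    and err: "\<And>Q. Q \<in> Qs \<Longrightarrow> L1_dist M (real_RN_deriv M Q) (cell_cond_exp M \<phi> (real_RN_deriv M Q)) \<le> \<epsilon>"
    and F: "f \<in> dens_set M (Qhat M Qs)"
  shows "L1_dist M f (cell_cond_exp M \<phi> f) \<le> \<epsilon>"
proof -
  have f: "integrable M f" by (rule integrable_dens_set[OF F prob_on_Qhat])
  define X where "X x = sgn (f x - cell_cond_exp M \<phi> f x)" for x
  have X_abs: "\<bar>X x\<bar> \<le> 1" for x by (simp add: X_def abs_sgn_eq)
  have [measurable]: "X \<in> borel_measurable M" unfolding X_def using f by measurable
  have X: "integrable M X" "AE x in M. \<bar>X x\<bar> \<le> 1"
    using X_abs by (auto intro: integrable_const_bound[where B=1])
  define Y where "Y x = X x - cell_cond_exp M \<phi> X x" for x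
  have [measurable]: "Y \<in> borel_measurable M" unfolding Y_def by measurable
  have Y_abs: "\<bar>Y x\<bar> \<le> 2" for x
    using X_abs[of x] abs_cell_cond_exp_le[OF _ X(2), of x] unfolding Y_def by simp
  have adjoint: "(\<integral>x. g x * Y x \<partial>M) = (\<integral>x. (g x - cell_cond_exp M \<phi> g x) * X x \<partial>M)" if "integrable M g" for g
    unfolding Y_def by (rule integral_mult_sub_cell_cond_exp[OF that X])
  have "- \<epsilon> \<le> integral\<^sup>L Q (\<lambda>x. - Y x)" if Q: "Q \<in> Qs" for Q
  proof -
    have Q': "prob_on M Q" "absolutely_continuous M Q" using Qs[OF Q] by auto
    note k = integrable_real_RN_deriv[OF sigma_finite_measure_axioms Q']
    have "integral\<^sup>L Q (\<lambda>x. - Y x) = - (\<integral>x. (real_RN_deriv M Q x - cell_cond_exp M \<phi> (real_RN_deriv M Q) x) * X x \<partial>M)"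
      by (simp add: integral_real_RN_deriv[OF sigma_finite_measure_axioms Q'] adjoint[OF k, symmetric])
    moreover have "\<bar>\<integral>x. (real_RN_deriv M Q x - cell_cond_exp M \<phi> (real_RN_deriv M Q) x) * X x \<partial>M\<bar> \<le> \<epsilon>"
      using abs_integral_mult_ess_bounded_le[OF Bochner_Integration.integrable_diff[OF k integrable_cell_cond_exp[of "real_RN_deriv M Q"]] _ X(2)]
        err[OF Q] by simp
    ultimately show ?thesis by linarith
  qed
  then have "- \<epsilon> \<le> (INF Q'\<in>Qs. integral\<^sup>L Q' (\<lambda>x. - Y x))"
    by (rule cINF_greatest[OF Qne])
  also have "\<dots> \<le> (\<integral>x. f x * - Y x \<partial>M)"
    using Y_abs by (intro dens_set_Qhat_integral_ge[OF F]) (auto simp: ess_bounded_def)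
  also have "(\<integral>x. f x * - Y x \<partial>M) = - L1_dist M f (cell_cond_exp M \<phi> f)"
    using adjoint[OF f] by (simp add: X_def abs_sgn)
  finally show ?thesis by simp
qed

lemma finite_bounded_seqs_convergent_subseq:
  fixes a :: "nat \<Rightarrow> 'v \<Rightarrow> real"
  assumes "finite V" and "\<And>n v. v \<in> V \<Longrightarrow> \<bar>a n v\<bar> \<le> B"
  shows "\<exists>r L. strict_mono r \<and> (\<forall>v\<in>V. (\<lambda>n. a (r n) v) \<longlonglongrightarrow> L v)"
  using assms
proof (induction V rule: finite_induct)
  case empty
  show ?case by (rule exI[of _ id]) (auto simp: strict_mono_def)
next
  case (insert w V)
  from insert.IH insert.prems obtain r L where r: "strict_mono r"
    and L: "\<forall>v\<in>V. (\<lambda>n. a (r n) v) \<longlonglongrightarrow> L v"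
    by blast
  have "bounded (range (\<lambda>n. a (r n) w))"
    unfolding bounded_iff using insert.prems by (auto intro!: exI[of _ B])
  from bounded_imp_convergent_subsequence[OF this] obtain l s
    where s: "strict_mono s" and l: "((\<lambda>n. a (r n) w) \<circ> s) \<longlonglongrightarrow> l"
    by blast
  have "(\<lambda>n. a (r (s n)) v) \<longlonglongrightarrow> (L(w := l)) v" if "v \<in> insert w V" for v
  proof (cases "v = w")
    case False
    with that L LIMSEQ_subseq_LIMSEQ[OF _ s, of "\<lambda>n. a (r n) v"] show ?thesis by (simp add: comp_def)
  qed (use l in \<open>simp add: comp_def\<close>)
  with strict_mono_o[OF r s] show ?case
    by (intro exI[of _ "r \<circ> s"] exI[of _ "L(w := l)"]) (simp add: comp_def)
qed

lemma (in finite_partition) almost_L1_Cauchy_subseq: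
  fixes f :: "nat \<Rightarrow> 'a \<Rightarrow> real"
  assumes f: "\<And>n. integrable M (f n)" and bounded: "\<And>n. (\<integral>x. \<bar>f n x\<bar> \<partial>M) \<le> B"
    and err: "\<And>n. L1_dist M (f n) (cell_cond_exp M \<phi> (f n)) \<le> e" and "0 < e"
  shows "\<exists>(r :: nat \<Rightarrow> nat) N. strict_mono r \<and> (\<forall>a\<ge>N. \<forall>b\<ge>N. L1_dist M (f (r a)) (f (r b)) \<le> 3 * e)"
proof -
  have "\<bar>cell_integral M \<phi> (f n) v\<bar> \<le> B" if "v \<in> \<phi> ` space M" for n v
  proof -
    have "\<bar>cell_integral M \<phi> (f n) v\<bar> \<le> (\<Sum>w\<in>\<phi> ` space M. \<bar>cell_integral M \<phi> (f n) w\<bar>)"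
      by (rule member_le_sum[OF that]) (simp_all add: finite_values)
    also have "\<dots> \<le> B"
      using sum_abs_cell_integral_le[OF f, of n] bounded[of n] by linarith
    finally show ?thesis .
  qed
  from finite_bounded_seqs_convergent_subseq[of _ "\<lambda>n v. cell_integral M \<phi> (f n) v", OF finite_values this]
  obtain r L where r: "strict_mono r"
    and L: "\<forall>v\<in>\<phi> ` space M. (\<lambda>n. cell_integral M \<phi> (f (r n)) v) \<longlonglongrightarrow> L v"
    by blast
  define S where "S n = (\<Sum>v\<in>\<phi> ` space M. \<bar>cell_integral M \<phi> (f (r n)) v - L v\<bar>)" for n
  have "S \<longlonglongrightarrow> (\<Sum>v\<in>\<phi> ` space M. \<bar>L v - L v\<bar>)"
    unfolding S_def using L by (intro tendsto_sum tendsto_rabs tendsto_diff tendsto_const) auto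
  then have "\<forall>\<^sub>F n in sequentially. S n < e / 2"
    by (rule order_tendstoD) (use \<open>0 < e\<close> in simp)
  then obtain N where N: "\<And>n. n \<ge> N \<Longrightarrow> S n < e / 2"
    unfolding eventually_sequentially by blast
  have "\<forall>a\<ge>N. \<forall>b\<ge>N. L1_dist M (f (r a)) (f (r b)) \<le> 3 * e"
  proof (intro allI impI)
    fix a b assume "a \<ge> N" "b \<ge> N"
    have "(\<Sum>v\<in>\<phi> ` space M. \<bar>cell_integral M \<phi> (f (r a)) v - cell_integral M \<phi> (f (r b)) v\<bar>) \<le> S a + S b"
      unfolding S_def sum.distrib[symmetric] by (intro sum_mono) linarith
    moreover have "S a < e / 2" "S b < e / 2" using N \<open>a \<ge> N\<close> \<open>b \<ge> N\<close> by auto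
    ultimately show "L1_dist M (f (r a)) (f (r b)) \<le> 3 * e"
      using L1_dist_le_cell_integrals[OF f f, of "r a" "r b"] err[of "r a"] err[of "r b"] by linarith
  qed
  with r show ?thesis by blast
qed

text \<open>A diagonal argument over the tolerances \<open>1 / (k + 1)\<close>.\<close>
lemma diagonal_L1_Cauchy_subseq:
  fixes f :: "nat \<Rightarrow> 'a \<Rightarrow> real"
  assumes close: "\<And>e (s :: nat \<Rightarrow> nat). 0 < e \<Longrightarrow> \<exists>(r :: nat \<Rightarrow> nat) N. strict_mono r \<and>
      (\<forall>a\<ge>N. \<forall>b\<ge>N. L1_dist M (f (s (r a))) (f (s (r b))) \<le> e)"
  shows "\<exists>r. strict_mono r \<and> L1_Cauchy M (f \<circ> r)"
proof -
  define P where "P k s \<longleftrightarrow> (\<exists>N. \<forall>a\<ge>N. \<forall>b\<ge>N. L1_dist M (f (s a)) (f (s b)) \<le> 1 / Suc k)"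
    for k :: nat and s :: "nat \<Rightarrow> nat"
  interpret subseqs P
  proof
    fix k :: nat and s :: "nat \<Rightarrow> nat"
    have "0 < 1 / real (Suc k)" by simp
    from close[OF this, of s] obtain r :: "nat \<Rightarrow> nat" and N where "strict_mono r"
      and "\<forall>a\<ge>N. \<forall>b\<ge>N. L1_dist M (f (s (r a))) (f (s (r b))) \<le> 1 / real (Suc k)"
      by blast
    then show "\<exists>r. strict_mono r \<and> P k (s \<circ> r)"
      unfolding P_def by auto
  qed
  have P_subseq: "P k (s \<circ> r)" if "strict_mono r" "P k s" for k and r s :: "nat \<Rightarrow> nat"
  proof -
    from \<open>P k s\<close> obtain N where N: "\<And>a b. a \<ge> N \<Longrightarrow> b \<ge> N \<Longrightarrow> L1_dist M (f (s a)) (f (s b)) \<le> 1 / Suc k"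
      unfolding P_def by blast
    have "L1_dist M (f (s (r a))) (f (s (r b))) \<le> 1 / Suc k" if "a \<ge> N" "b \<ge> N" for a b
      using N seq_suble[OF \<open>strict_mono r\<close>, of a] seq_suble[OF \<open>strict_mono r\<close>, of b] that by simp
    then show ?thesis unfolding P_def by auto
  qed
  have "L1_Cauchy M (f \<circ> diagseq)"
    unfolding L1_Cauchy_def
  proof (intro allI impI)
    fix e :: real assume "0 < e"
    then obtain k :: nat where k: "1 / Suc k < e"
      using nat_approx_posE by blast
    obtain N where N: "\<And>a b. a \<ge> N \<Longrightarrow> b \<ge> N \<Longrightarrow>
        L1_dist M (f (diagseq (Suc k + a))) (f (diagseq (Suc k + b))) \<le> 1 / Suc k"
      using diagseq_holds[OF P_subseq, of k] unfolding P_def by auto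
    have "L1_dist M (f (diagseq a)) (f (diagseq b)) \<le> e" if "a \<ge> N + Suc k" "b \<ge> N + Suc k" for a b
    proof -
      have "N \<le> a - Suc k" "N \<le> b - Suc k" using that by auto
      with N[of "a - Suc k" "b - Suc k"] k that show ?thesis by simp
    qed
    then show "\<exists>N. \<forall>a\<ge>N. \<forall>b\<ge>N. L1_dist M ((f \<circ> diagseq) a) ((f \<circ> diagseq) b) \<le> e"
      by auto
  qed
  with subseq_diagseq show ?thesis by blast
qed

lemma uniform_cell_approx_imp_L1_Cauchy_subseq:
  fixes f :: "nat \<Rightarrow> 'a \<Rightarrow> real"
  assumes f: "\<And>n. integrable M (f n)" and bounded: "\<And>n. (\<integral>x. \<bar>f n x\<bar> \<partial>M) \<le> B"
    and approx: "\<And>e. 0 < e \<Longrightarrow> \<exists>\<phi> :: 'a \<Rightarrow> 'b. finite_partition M \<phi> \<and>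
      (\<forall>n. L1_dist M (f n) (cell_cond_exp M \<phi> (f n)) \<le> e)"
  shows "\<exists>r. strict_mono r \<and> L1_Cauchy M (f \<circ> r)"
proof (rule diagonal_L1_Cauchy_subseq)
  fix e :: real and s :: "nat \<Rightarrow> nat"
  assume "0 < e"
  then have pos: "0 < e / 3" by simp
  from approx[OF pos] obtain \<phi> :: "'a \<Rightarrow> 'b" where "finite_partition M \<phi>"
    and err: "\<And>n. L1_dist M (f n) (cell_cond_exp M \<phi> (f n)) \<le> e / 3"
    by blast
  then interpret finite_partition M \<phi> by simp
  from almost_L1_Cauchy_subseq[of "\<lambda>n. f (s n)", OF f bounded err pos]
  show "\<exists>(r :: nat \<Rightarrow> nat) N. strict_mono r \<and> (\<forall>a\<ge>N. \<forall>b\<ge>N. L1_dist M (f (s (r a))) (f (s (r b))) \<le> e)"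
    by simp
qed

lemma dens_set_Qhat_uniform_cell_approx:
  assumes M: "prob_space M" and Qne: "Qs \<noteq> {}"
    and Qs: "\<And>Q. Q \<in> Qs \<Longrightarrow> prob_on M Q \<and> absolutely_continuous M Q"
    and tv: "tv_relcompact M Qs" and "0 < \<epsilon>"
  shows "\<exists>\<phi> :: 'a \<Rightarrow> ('a measure \<Rightarrow> real). finite_partition M \<phi> \<and>
    (\<forall>f\<in>dens_set M (Qhat M Qs). L1_dist M f (cell_cond_exp M \<phi> f) \<le> \<epsilon>)"
proof -
  obtain \<phi> :: "'a \<Rightarrow> ('a measure \<Rightarrow> real)" where "finite_partition M \<phi>"
    and err: "\<forall>Q\<in>Qs. L1_dist M (real_RN_deriv M Q) (cell_cond_exp M \<phi> (real_RN_deriv M Q)) \<le> \<epsilon>"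
    using uniform_cell_approx_real_RN_deriv[OF M Qs tv \<open>0 < \<epsilon>\<close>] by blast
  then interpret finite_partition M \<phi> by simp
  show ?thesis
    using L1_dist_cell_cond_exp_dens_set_Qhat_le[OF Qne Qs] err finite_partition_axioms by blast
qed

lemma L1_compact_dens_set_Qhat:
  assumes M: "prob_space M" and Qne: "Qs \<noteq> {}"
    and Qs: "\<And>Q. Q \<in> Qs \<Longrightarrow> prob_on M Q \<and> absolutely_continuous M Q"
    and tv: "tv_relcompact M Qs"
  shows "L1_compact M (dens_set M (Qhat M Qs))"
  unfolding L1_compact_def
proof (intro allI impI)
  fix f :: "nat \<Rightarrow> 'a \<Rightarrow> real"
  assume F: "\<forall>n. f n \<in> dens_set M (Qhat M Qs)"
  have f: "integrable M (f n)" for n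
    using integrable_dens_set[OF F[rule_format] prob_on_Qhat] .
  have "(\<integral>x. \<bar>f n x\<bar> \<partial>M) = integral\<^sup>L M (f n)" for n
    using F by (intro Bochner_Integration.integral_cong) (auto simp: dens_set_def)
  then have bounded: "(\<integral>x. \<bar>f n x\<bar> \<partial>M) \<le> 1" for n
    using integral_dens_set[OF F[rule_format] prob_on_Qhat] by simp
  have "\<exists>\<phi> :: 'a \<Rightarrow> ('a measure \<Rightarrow> real). finite_partition M \<phi> \<and>
      (\<forall>n. L1_dist M (f n) (cell_cond_exp M \<phi> (f n)) \<le> e)" if "0 < e" for e
    using dens_set_Qhat_uniform_cell_approx[OF M Qne Qs tv that] F by blast
  from uniform_cell_approx_imp_L1_Cauchy_subseq[where f=f and B=1, OF f bounded this]
  obtain r where r: "strict_mono r" and "L1_Cauchy M (f \<circ> r)"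
    by blast
  moreover have fr: "integrable M ((f \<circ> r) n)" for n
    using f by simp
  ultimately obtain g where g: "integrable M g" and conv: "L1_conv M (f \<circ> r) g"
    using L1_Cauchy_imp_L1_conv by metis
  have "\<forall>n. (f \<circ> r) n \<in> dens_set M (Qhat M Qs)"
    using F by simp
  with L1_closed_dens_set_Qhat[unfolded L1_closed_def, rule_format, OF conjI[OF _ conjI[OF g conv]]]
  obtain h where h: "h \<in> dens_set M (Qhat M Qs)" and "AE x in M. g x = h x"
    by blast
  then have "L1_conv M (f \<circ> r) h"
    using fr g h by (intro L1_conv_AE_cong[OF conv]) (auto simp: dens_set_def)
  with r h show "\<exists>r h. strict_mono r \<and> h \<in> dens_set M (Qhat M Qs) \<and> L1_conv M (f \<circ> r) h"
    by blast
qed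

lemma L1_relcompact_subset:
  assumes compact: "L1_compact M F" and "G \<subseteq> F" and integrable: "\<And>f. f \<in> F \<Longrightarrow> integrable M f"
  shows "L1_relcompact M G"
  unfolding L1_relcompact_def
proof (intro allI impI)
  fix f :: "nat \<Rightarrow> 'a \<Rightarrow> real" assume "\<forall>n. f n \<in> G"
  with \<open>G \<subseteq> F\<close> have "\<forall>n. f n \<in> F" by blast
  with compact obtain r h where "strict_mono r" "h \<in> F" "L1_conv M (f \<circ> r) h"
    unfolding L1_compact_def by blast
  with integrable show "\<exists>r h. strict_mono r \<and> integrable M h \<and> L1_conv M (f \<circ> r) h"
    by blast
qed

lemma dens_set_mono: "Qs \<subseteq> Qs' \<Longrightarrow> dens_set M Qs \<subseteq> dens_set M Qs'"
  by (auto simp: dens_set_def)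

theorem lemma6p9:
  fixes M :: "'a measure" and Qs :: "'a measure set"
  assumes "prob_space M"
    and "Qs \<noteq> {}"
    and "\<And>Q. Q \<in> Qs \<Longrightarrow> prob_on M Q \<and> absolutely_continuous M Q"
  shows "L1_closed M (dens_set M (Qhat M Qs)) \<and>
    (tv_relcompact M Qs \<longrightarrow>
       L1_compact M (dens_set M (Qhat M Qs)) \<and> L1_relcompact M (dens_set M (Qhat_e M Qs)))"
proof (intro conjI impI)
  show "L1_closed M (dens_set M (Qhat M Qs))"
    by (rule L1_closed_dens_set_Qhat)
  assume "tv_relcompact M Qs"
  with assms show compact: "L1_compact M (dens_set M (Qhat M Qs))"
    by (rule L1_compact_dens_set_Qhat)
  have "dens_set M (Qhat_e M Qs) \<subseteq> dens_set M (Qhat M Qs)"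
    by (rule dens_set_mono) (auto simp: Qhat_e_def)
  with compact show "L1_relcompact M (dens_set M (Qhat_e M Qs))"
  proof (rule L1_relcompact_subset)
    show "integrable M f" if "f \<in> dens_set M (Qhat M Qs)" for f
      using that prob_on_Qhat by (rule integrable_dens_set)
  qed
qed

end
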